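(* Consider the line network model (see context) with $\ell$ links and erasure probabilities $p_1,\dots,p_\ell$ having a unique worst link, i.e. there is $m$ with $p_m=\max_i p_i<1$ and $p_i<p_m$ for $i\ne m$. Let $A:=1-\max_{1\le i\le\ell}p_i$ and fix $\delta\in(0,1/2)$. Then for all sufficiently large $n$, $$\mathbb{P}\!\left[\,|T_n-\mathbb{E}T_n|>\frac{n^{1/2+\delta}}{A}\right]\le \frac{2A}{n}+\frac{2A\,n^{2\delta}}{n^2-n^{1+2\delta}}.$$ In particular (Theorem 2), with $\epsilon_n=n^{3/4}/A$, $\mathbb{P}[|T_n-\mathbb{E}T_n|>\epsilon_n]\le \frac{2A}{n}+o(1/n)$.
   Context: Line network model. Fix integers $\ell\ge1$, $n\ge1$ and erasure probabilities $p_1,\dots,p_\ell\in[0,1)$. Let $\{z_{t,i}: t\ge1,\,1\le i\le\ell\}$ be independent Bernoulli random variables with $\mathbb{P}(z_{t,i}=1)=1-p_i$ ($z_{t,i}=1$ means link $i$ is ON at time step $t$). Nodes $N^{(1)},\dots,N^{(\ell+1)}$, link $i$ from $N^{(i)}$ to $N^{(i+1)}$; the source holds $n$ packets and each node sends random linear combinations of its received packets (idealized so a transmission is innovative whenever possible). The rank $\rho_i(t)$ of node $N^{(i)}$ after $t$ steps satisfies $\rho_1(t)=n$, $\rho_i(0)=0$ for $i\ge2$, and $\rho_{i+1}(t)=\rho_{i+1}(t-1)+z_{t,i}\mathbf 1\{\rho_i(t-1)>\rho_{i+1}(t-1)\}$ for $t\ge1$, $1\le i\le \ell$. The completion time is $T_n:=\min\{t\ge0:\rho_{\ell+1}(t)=n\}$.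 *)

theory Defs
  imports "HOL-Probability.Probability"
begin

text \<open>Rank of node i after t steps, for a fixed realisation zz of the link states:
  zz t i = True means link i is ON at time step t (t \<ge> 1, 1 \<le> i \<le> l).
  Node 1 is the source holding n packets.\<close>
fun rank :: "(nat \<Rightarrow> nat \<Rightarrow> bool) \<Rightarrow> nat \<Rightarrow> nat \<Rightarrow> nat \<Rightarrow> nat" where
  "rank zz n 0 i = (if i \<le> 1 then n else 0)"
| "rank zz n (Suc t) i =
     (if i \<le> 1 then n
      else rank zz n t i +
           (if zz (Suc t) (i - 1) \<and> rank zz n t (i - 1) > rank zz n t i then 1 else 0))"

text \<open>Completion time T_n = min {t. rank of node l+1 at time t equals n};
  set to 0 on the (null) event that this never happens.\<close>
definition completion_time :: "(nat \<Rightarrow> nat \<Rightarrow> bool) \<Rightarrow> nat \<Rightarrow> nat \<Rightarrow> nat" where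
  "completion_time zz l n =
     (if \<exists>t. rank zz n t (Suc l) = n then (LEAST t. rank zz n t (Suc l) = n) else 0)"

end

theory Submission
  imports Defs "HOL-Real_Asymp.Real_Asymp"
begin

(* Write A for the rate of the worst link and c_n = n / A for the first-order value of T_n.
   The proof shows that, up to an event of probability O(1/n^2), T_n lies in the window
   [c_n - w_n, c_n + w_n + 1] with w_n = n^(1/2+delta) / (4A), and that E T_n lies in
   [c_n - 2 w_n, c_n + 3 w_n]; then |T_n - E T_n| > 4 w_n forces T_n out of the window. *)

lemma eventually_real_ge: "\<forall>\<^sub>F n in sequentially. X \<le> real n"
  using filterlim_real_sequentially by (simp add: filterlim_at_top)

lemma powr_at_top_sequentially:
  fixes e a :: real
  assumes "0 < e" "0 < a"
  shows "filterlim (\<lambda>n. real n powr e / a) at_top sequentially"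
  using assms by real_asymp

lemma stretched_exp_small:
  fixes C \<kappa> \<epsilon> :: real
  assumes "0 < \<kappa>" "0 < \<epsilon>"
  shows "\<forall>\<^sub>F n in sequentially. C * real n ^ 2 * exp (- \<kappa> * real n powr \<epsilon>) \<le> 1 / real n ^ 2"
proof -
  have "((\<lambda>n. real n ^ 4 * (C * exp (- \<kappa> * real n powr \<epsilon>))) \<longlongrightarrow> 0) sequentially"
    using assms by real_asymp
  then have "\<forall>\<^sub>F n in sequentially. real n ^ 4 * (C * exp (- \<kappa> * real n powr \<epsilon>)) < 1"
    by (rule order_tendstoD) simp
  then show ?thesis
    using eventually_gt_at_top[of 0]
    by eventually_elim (simp add: field_simps power4_eq_xxxx power2_eq_square)
qed

lemma poly_exp_le_geometric:
  fixes \<beta> :: real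
  assumes "0 < \<beta>"
  shows "\<forall>\<^sub>F t in sequentially. (real t + 1)^2 * exp (- \<beta> * real t) \<le> exp (- \<beta> / 2) ^ t"
proof -
  have "((\<lambda>t. (real t + 1)^2 * exp (- \<beta> * real t / 2)) \<longlongrightarrow> 0) sequentially"
    using assms by real_asymp
  then have "\<forall>\<^sub>F t in sequentially. (real t + 1)^2 * exp (- \<beta> * real t / 2) < 1"
    by (rule order_tendstoD) simp
  then show ?thesis
  proof eventually_elim
    case (elim t)
    have "(real t + 1)^2 * exp (- \<beta> * real t) =
          ((real t + 1)^2 * exp (- \<beta> * real t / 2)) * exp (- \<beta> * real t / 2)"
      by (simp add: exp_add[symmetric])
    also have "\<dots> \<le> exp (- \<beta> * real t / 2)" using elim by simp
    also have "\<dots> = exp (- \<beta> / 2) ^ t" by (simp add: exp_of_nat_mult[symmetric])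
    finally show ?case .
  qed
qed

context prob_space
begin

lemma nn_integral_nat_tail_sum:
  fixes X :: "'a \<Rightarrow> nat"
  assumes [measurable]: "X \<in> measurable M (count_space UNIV)"
  shows "(\<integral>\<^sup>+\<omega>. ennreal (real (X \<omega>)) \<partial>M) = (\<Sum>t. ennreal (prob {\<omega>\<in>space M. t < X \<omega>}))"
proof -
  have layer: "ennreal (real (X \<omega>)) = (\<Sum>t. indicator {\<omega>\<in>space M. t < X \<omega>} \<omega>)"
    if "\<omega> \<in> space M" for \<omega>
  proof -
    have "(\<Sum>t. indicator {\<omega>\<in>space M. t < X \<omega>} \<omega> :: ennreal) = (\<Sum>t<X \<omega>. 1)"
      using that by (subst suminf_finite[of "{..<X \<omega>}"]) (auto simp: indicator_def)
    then show ?thesis by (simp add: ennreal_of_nat_eq_real_of_nat)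
  qed
  have "(\<integral>\<^sup>+\<omega>. ennreal (real (X \<omega>)) \<partial>M) =
        (\<integral>\<^sup>+\<omega>. (\<Sum>t. indicator {\<omega>\<in>space M. t < X \<omega>} \<omega>) \<partial>M)"
    by (rule nn_integral_cong) (simp add: layer)
  also have "\<dots> = (\<Sum>t. emeasure M {\<omega>\<in>space M. t < X \<omega>})"
    by (simp add: nn_integral_suminf)
  finally show ?thesis by (simp add: emeasure_eq_measure)
qed

(* If the tails beyond N are dominated by a summable g, then X is integrable and
   E X <= t0 + N P(X > t0) + sum g: the first t0 tail terms are at most 1, the terms
   between t0 and N are at most P(X > t0), the rest are bounded by g. *)
lemma expectation_nat_le_tail:
  fixes X :: "'a \<Rightarrow> nat" and g :: "nat \<Rightarrow> real"
  assumes X [measurable]: "X \<in> measurable M (count_space UNIV)"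
    and "t0 \<le> N" and g: "summable g" "\<And>t. 0 \<le> g t"
    and tail: "\<And>t. N \<le> t \<Longrightarrow> prob {\<omega>\<in>space M. t < X \<omega>} \<le> g t"
  shows "integrable M (\<lambda>\<omega>. real (X \<omega>))"
    and "expectation (\<lambda>\<omega>. real (X \<omega>)) \<le> real t0 + real N * prob {\<omega>\<in>space M. t0 < X \<omega>} + suminf g"
proof -
  define f where "f t = prob {\<omega>\<in>space M. t < X \<omega>}" for t
  have f_summable: "summable f"
    by (rule summable_comparison_test'[OF g(1), where N=N]) (simp add: f_def tail)
  have nn: "(\<integral>\<^sup>+\<omega>. ennreal (real (X \<omega>)) \<partial>M) = ennreal (suminf f)"
    unfolding nn_integral_nat_tail_sum[OF X] f_def[symmetric]
    using f_summable by (rule suminf_ennreal2[rotated]) (simp add: f_def)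
  show int: "integrable M (\<lambda>\<omega>. real (X \<omega>))"
    by (rule integrableI_nonneg) (auto simp: nn)
  have "ennreal (expectation (\<lambda>\<omega>. real (X \<omega>))) = ennreal (suminf f)"
    using nn_integral_eq_integral[OF int] nn by simp
  then have E: "expectation (\<lambda>\<omega>. real (X \<omega>)) = suminf f"
    using f_summable by (intro ennreal_inj[THEN iffD1]) (auto intro!: suminf_nonneg simp: f_def)
  have head: "(\<Sum>t<N. f t) \<le> real t0 + real N * f t0"
  proof -
    have "(\<Sum>t<N. f t) = (\<Sum>t\<in>{0..<t0}. f t) + (\<Sum>t\<in>{t0..<N}. f t)"
      using \<open>t0 \<le> N\<close> by (simp add: atLeast0LessThan[symmetric] sum.atLeastLessThan_concat)
    also have "\<dots> \<le> real (card {0..<t0}) * 1 + real (card {t0..<N}) * f t0"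
      by (intro add_mono sum_bounded_above) (auto simp: f_def intro!: finite_measure_mono)
    also have "\<dots> \<le> real t0 + real N * f t0"
      by (auto intro!: mult_right_mono simp: f_def)
    finally show ?thesis .
  qed
  have "(\<Sum>t. f (t + N)) \<le> (\<Sum>t. g (t + N))"
    using summable_ignore_initial_segment[OF f_summable, of N] summable_ignore_initial_segment[OF g(1), of N]
    by (intro suminf_le) (auto simp: f_def tail)
  also have "\<dots> \<le> suminf g"
    using suminf_split_initial_segment[OF g(1), of N] g(2) by (simp add: sum_nonneg)
  finally have "suminf f \<le> suminf g + (\<Sum>t<N. f t)"
    using suminf_split_initial_segment[OF f_summable, of N] by linarith
  then show "expectation (\<lambda>\<omega>. real (X \<omega>)) \<le> real t0 + real N * prob {\<omega>\<in>space M. t0 < X \<omega>} + suminf g"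
    using head unfolding E f_def by linarith
qed

lemma expectation_ge_markov:
  fixes X :: "'a \<Rightarrow> real"
  assumes X: "integrable M X" and nonneg: "\<And>\<omega>. \<omega> \<in> space M \<Longrightarrow> 0 \<le> X \<omega>" and "0 \<le> y"
  shows "y * (1 - prob {\<omega>\<in>space M. X \<omega> < y}) \<le> expectation X"
proof -
  have [measurable]: "X \<in> borel_measurable M" using X by (rule borel_measurable_integrable)
  define S where "S = {\<omega>\<in>space M. y \<le> X \<omega>}"
  have [measurable]: "S \<in> sets M" unfolding S_def by measurable
  have "y * prob S = expectation (\<lambda>\<omega>. y * indicator S \<omega>)" by simp
  also have "\<dots> \<le> expectation X"
  proof (rule integral_mono[OF _ X])
    show "integrable M (\<lambda>\<omega>. y * indicator S \<omega>)"
      by (intro integrable_mult_right integrable_real_indicator) (auto simp: less_top[symmetric])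
  qed (use \<open>0 \<le> y\<close> nonneg in \<open>auto simp: S_def indicator_def\<close>)
  finally have "y * prob S \<le> expectation X" .
  moreover have "prob S = 1 - prob {\<omega>\<in>space M. X \<omega> < y}"
  proof -
    have "S = space M - {\<omega>\<in>space M. X \<omega> < y}" by (auto simp: S_def)
    then show ?thesis by (simp add: prob_compl)
  qed
  ultimately show ?thesis by simp
qed

end

definition on_count :: "(nat \<Rightarrow> nat \<Rightarrow> bool) \<Rightarrow> nat \<Rightarrow> nat \<Rightarrow> nat \<Rightarrow> nat" where
  "on_count zz k a b = (\<Sum>u\<in>{a<..b}. if zz u k then 1 else 0)"

lemma on_count_empty [simp]: "on_count zz k a a = 0"
  by (simp add: on_count_def)

lemma on_count_Suc:
  "a \<le> b \<Longrightarrow> on_count zz k a (Suc b) = on_count zz k a b + (if zz (Suc b) k then 1 else 0)"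
proof -
  assume "a \<le> b"
  then have "{a<..Suc b} = insert (Suc b) {a<..b}" by auto
  then show ?thesis by (simp add: on_count_def)
qed

lemma rank_source: "i \<le> 1 \<Longrightarrow> rank zz n t i = n"
  by (cases t) auto

lemma rank_mono_time: "t \<le> t' \<Longrightarrow> rank zz n t i \<le> rank zz n t' i"
proof -
  have "rank zz n t i \<le> rank zz n (Suc t) i" for t
    by (cases "i \<le> 1") (auto simp: rank_source)
  then show "t \<le> t' \<Longrightarrow> rank zz n t i \<le> rank zz n t' i"
    by (rule lift_Suc_mono_le)
qed

lemma rank_le_prev: "rank zz n t (Suc i) \<le> rank zz n t i"
proof (induction t arbitrary: i)
  case 0
  then show ?case by auto
next
  case (Suc t)
  show ?case
  proof (cases "i = 0")
    case True
    then show ?thesis by (simp add: rank_source)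
  next
    case False
    then have "rank zz n (Suc t) (Suc i) \<le> rank zz n t i"
      using Suc.IH[of i] by auto
    also have "\<dots> \<le> rank zz n (Suc t) i" by (rule rank_mono_time) simp
    finally show ?thesis .
  qed
qed

lemma rank_antimono_node: "i \<le> j \<Longrightarrow> rank zz n t j \<le> rank zz n t i"
  using rank_le_prev by (rule antimono_iff_le_Suc[THEN iffD2, unfolded antimono_def, rule_format])

lemma rank_le_n: "rank zz n t i \<le> n"
  using rank_antimono_node[of 0 i zz n t] by (simp add: rank_source)

lemma rank_le_on_count: "k \<ge> 1 \<Longrightarrow> rank zz n t (Suc k) \<le> on_count zz k 0 t"
  by (induction t) (auto simp: on_count_Suc)

(* Node k+1 gains a packet at every ON step of link k at which it is behind node k. *)
lemma rank_window_lower: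
  assumes "k \<ge> 1"
  shows "rank zz n s (Suc k) \<ge> on_count zz k 0 s \<or>
         (\<exists>r<s. rank zz n s (Suc k) \<ge> rank zz n r k + on_count zz k (Suc r) s)"
proof (induction s)
  case 0
  then show ?case by simp
next
  case (Suc s)
  show ?case
  proof (cases "zz (Suc s) k \<and> rank zz n s k \<le> rank zz n s (Suc k)")
    case True
    then have "rank zz n (Suc s) (Suc k) = rank zz n s (Suc k)" using assms by auto
    then show ?thesis using True by (intro disjI2 exI[of _ s]) simp
  next
    case False
    then have step: "rank zz n (Suc s) (Suc k) = rank zz n s (Suc k) + (if zz (Suc s) k then 1 else 0)"
      using assms by auto
    from Suc.IH show ?thesis
    proof (elim disjE exE conjE)
      assume "on_count zz k 0 s \<le> rank zz n s (Suc k)"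
      then show ?thesis using step by (auto simp: on_count_Suc)
    next
      fix r assume "r < s" "rank zz n r k + on_count zz k (Suc r) s \<le> rank zz n s (Suc k)"
      then show ?thesis using step by (intro disjI2 exI[of _ r]) (auto simp: on_count_Suc)
    qed
  qed
qed

lemma rank_linear_lower:
  fixes A x :: real
  assumes A: "A \<le> 1" and x: "x \<ge> 0"
    and G: "\<forall>k\<in>{1..l}. \<forall>a b. a \<le> b \<longrightarrow> b \<le> t \<longrightarrow> real (on_count zz k a b) \<ge> A * (real b - real a) - x"
  shows "k \<le> l \<Longrightarrow> s \<le> t \<Longrightarrow> real (rank zz n s (Suc k)) \<ge> min (real n) (A * real s - real k * (x + 1))"
proof (induction k arbitrary: s)
  case 0
  then show ?case by (simp add: rank_source)
next
  case (Suc k s)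
  have k1: "Suc k \<ge> 1" by simp
  have Gk: "\<And>a b. a \<le> b \<Longrightarrow> b \<le> t \<Longrightarrow> real (on_count zz (Suc k) a b) \<ge> A * (real b - real a) - x"
    using G Suc.prems by auto
  from rank_window_lower[OF k1, where zz=zz and n=n and s=s] show ?case
  proof
    assume h: "on_count zz (Suc k) 0 s \<le> rank zz n s (Suc (Suc k))"
    have "A * real s - x \<le> real (on_count zz (Suc k) 0 s)" using Gk[of 0 s] Suc.prems by simp
    moreover have "real (Suc k) * (x + 1) \<ge> x" using x by (simp add: algebra_simps)
    moreover have "real (on_count zz (Suc k) 0 s) \<le> real (rank zz n s (Suc (Suc k)))" using h by simp
    ultimately have "A * real s - real (Suc k) * (x + 1) \<le> real (rank zz n s (Suc (Suc k)))" by linarith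
    then show ?thesis by (simp add: min_le_iff_disj)
  next
    assume "\<exists>r<s. rank zz n r (Suc k) + on_count zz (Suc k) (Suc r) s \<le> rank zz n s (Suc (Suc k))"
    then obtain r where r: "r < s" "rank zz n r (Suc k) + on_count zz (Suc k) (Suc r) s \<le> rank zz n s (Suc (Suc k))" by blast
    have IH: "real (rank zz n r (Suc k)) \<ge> min (real n) (A * real r - real k * (x + 1))"
      using Suc.IH[of r] Suc.prems r by auto
    have C: "real (on_count zz (Suc k) (Suc r) s) \<ge> A * (real s - real (Suc r)) - x"
      using Gk[of "Suc r" s] r Suc.prems by auto
    have R: "real (rank zz n r (Suc k)) + real (on_count zz (Suc k) (Suc r) s) \<le> real (rank zz n s (Suc (Suc k)))"
      using r(2) by (metis of_nat_add of_nat_mono)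
    show ?thesis
    proof (cases "real n \<le> A * real r - real k * (x + 1)")
      case True
      then show ?thesis using IH R by (smt (verit) of_nat_0_le_iff)
    next
      case False
      then have "real (rank zz n r (Suc k)) \<ge> A * real r - real k * (x + 1)" using IH by linarith
      then have "real (rank zz n s (Suc (Suc k))) \<ge> A * real r - real k * (x + 1) + A * (real s - real (Suc r)) - x"
        using R C by linarith
      moreover have "A * real r - real k * (x + 1) + A * (real s - real (Suc r)) - x \<ge> A * real s - real (Suc k) * (x + 1)"
        using A by (simp add: algebra_simps)
      ultimately have "A * real s - real (Suc k) * (x + 1) \<le> real (rank zz n s (Suc (Suc k)))" by linarith
      then show ?thesis by (simp add: min_le_iff_disj)
    qed
  qed
qed

lemma completion_time_le: "rank zz n t (Suc l) = n \<Longrightarrow> completion_time zz l n \<le> t"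
  unfolding completion_time_def by (auto intro: Least_le)

lemma completion_time_less:
  fixes y :: real
  assumes "real (completion_time zz l n) < y"
  shows "(\<forall>t. rank zz n t (Suc l) < n) \<or> rank zz n (nat \<lfloor>y\<rfloor>) (Suc l) = n"
proof (cases "\<exists>t. rank zz n t (Suc l) = n")
  case True
  then have "rank zz n (completion_time zz l n) (Suc l) = n"
    unfolding completion_time_def by (auto intro: LeastI_ex)
  moreover have "completion_time zz l n \<le> nat \<lfloor>y\<rfloor>" using assms by linarith
  ultimately show ?thesis
    using rank_mono_time rank_le_n by (metis le_antisym)
next
  case False
  then show ?thesis using rank_le_n[of zz n _ "Suc l"] by (metis le_neq_implies_less)
qed

lemma finished_on_count:
  assumes "m \<in> {1..l}" "rank zz n t (Suc l) = n"
  shows "n \<le> on_count zz m 0 t"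
  using rank_antimono_node[of "Suc m" "Suc l" zz n t] rank_le_on_count[of m zz n t] assms by auto

lemma finished_if_windows_good:
  fixes A x :: real
  assumes "A \<le> 1" "x \<ge> 0"
    and "\<forall>k\<in>{1..l}. \<forall>a b. a \<le> b \<longrightarrow> b \<le> t \<longrightarrow> real (on_count zz k a b) \<ge> A * (real b - real a) - x"
    and "A * real t - real l * (x + 1) \<ge> real n"
  shows "rank zz n t (Suc l) = n"
proof -
  have "real (rank zz n t (Suc l)) \<ge> min (real n) (A * real t - real l * (x + 1))"
    by (rule rank_linear_lower[OF assms(1-3)]) auto
  then show ?thesis using assms(4) rank_le_n[of zz n t "Suc l"] by linarith
qed

locale line_network = prob_space M for M :: "'a measure" +
  fixes z :: "nat \<Rightarrow> nat \<Rightarrow> 'a \<Rightarrow> bool" and l :: nat and p :: "nat \<Rightarrow> real"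
  assumes l1: "l \<ge> 1"
    and p_range: "\<forall>i\<in>{1..l}. 0 \<le> p i \<and> p i < 1"
    and z_meas: "\<forall>t i. z t i \<in> measurable M (count_space UNIV)"
    and z_indep: "indep_vars (\<lambda>_. count_space UNIV) (\<lambda>(t, i). z t i)
                    {(t, i). 1 \<le> t \<and> 1 \<le> i \<and> i \<le> l}"
    and z_distr: "\<forall>t i. 1 \<le> t \<longrightarrow> 1 \<le> i \<longrightarrow> i \<le> l \<longrightarrow>
                    measure M {\<omega> \<in> space M. z t i \<omega>} = 1 - p i"
begin

abbreviation Z :: "'a \<Rightarrow> nat \<Rightarrow> nat \<Rightarrow> bool" where "Z \<omega> \<equiv> (\<lambda>t i. z t i \<omega>)"

lemma z_measurable [measurable]: "z t i \<in> measurable M (count_space UNIV)"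
  using z_meas by blast

lemma on_count_meas [measurable]: "(\<lambda>\<omega>. on_count (Z \<omega>) k a b) \<in> measurable M (count_space UNIV)"
  unfolding on_count_def by measurable

lemma rank_meas [measurable]: "(\<lambda>\<omega>. rank (Z \<omega>) n t i) \<in> measurable M (count_space UNIV)"
proof (induction t arbitrary: i)
  case 0
  then show ?case by simp
next
  case (Suc t)
  then show ?case by simp measurable
qed

lemma ctime_meas [measurable]: "(\<lambda>\<omega>. completion_time (Z \<omega>) l n) \<in> measurable M (count_space UNIV)"
  unfolding completion_time_def by measurable

definition on_ind :: "nat \<times> nat \<Rightarrow> 'a \<Rightarrow> real" where
  "on_ind j \<omega> = (if (case j of (t, i) \<Rightarrow> z t i) \<omega> then 1 else 0)"

lemma on_count_as_sum:
  "real (on_count (Z \<omega>) k a b) = (\<Sum>j\<in>(\<lambda>u. (u, k)) ` {a<..b}. on_ind j \<omega>)"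
proof -
  have "(\<Sum>j\<in>(\<lambda>u. (u, k)) ` {a<..b}. on_ind j \<omega>) = (\<Sum>u\<in>{a<..b}. on_ind (u, k) \<omega>)"
    by (subst sum.reindex) (auto simp: inj_on_def)
  moreover have "real (on_count (Z \<omega>) k a b) = (\<Sum>u\<in>{a<..b}. on_ind (u, k) \<omega>)"
    unfolding on_count_def of_nat_sum by (intro sum.cong) (auto simp: on_ind_def)
  ultimately show ?thesis by simp
qed

lemma expectation_on_ind:
  assumes "1 \<le> t" "i \<in> {1..l}"
  shows "expectation (on_ind (t, i)) = 1 - p i"
proof -
  have "expectation (on_ind (t, i)) = expectation (indicator {\<omega>\<in>space M. z t i \<omega>})"
    by (intro Bochner_Integration.integral_cong) (auto simp: on_ind_def indicator_def)
  also have "\<dots> = 1 - p i" using z_distr assms by simp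
  finally show ?thesis .
qed

lemma on_count_Hoeffding:
  assumes k: "k \<in> {1..l}" and ab: "a < b"
  shows "Hoeffding_ineq M ((\<lambda>u. (u, k)) ` {a<..b}) on_ind (\<lambda>_. 0) (\<lambda>_. 1)"
    and "(\<Sum>j\<in>(\<lambda>u. (u, k)) ` {a<..b}. expectation (on_ind j)) = (1 - p k) * (real b - real a)"
    and "(\<Sum>j\<in>(\<lambda>u. (u, k)) ` {a<..b}. ((\<lambda>_. 1::real) j - (\<lambda>_. 0) j)\<^sup>2) = real b - real a"
proof -
  let ?I = "(\<lambda>u. (u, k)) ` {a<..b}"
  have sub: "?I \<subseteq> {(t, i). 1 \<le> t \<and> 1 \<le> i \<and> i \<le> l}" using k by auto
  have ind: "indep_vars (\<lambda>_. borel) on_ind ?I"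
  proof -
    have "indep_vars (\<lambda>_. borel) (\<lambda>i x. (\<lambda>_ b. if b then 1 else 0 :: real) i ((\<lambda>(t, i). z t i) i x)) ?I"
      by (rule indep_vars_compose2[OF indep_vars_subset[OF z_indep sub]]) auto
    then show ?thesis unfolding on_ind_def[abs_def] by simp
  qed
  have card: "card ?I = b - a" by (subst card_image) (auto simp: inj_on_def)
  have E: "expectation (on_ind j) = 1 - p k" if "j \<in> ?I" for j
    using that k by (auto intro: expectation_on_ind)
  have mu: "(\<Sum>j\<in>?I. expectation (on_ind j)) = (1 - p k) * (real b - real a)"
  proof -
    have "(\<Sum>j\<in>?I. expectation (on_ind j)) = (\<Sum>j\<in>?I. 1 - p k)" by (rule sum.cong) (use E in auto)
    also have "\<dots> = real (card ?I) * (1 - p k)" by simp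
    finally show ?thesis using card ab by (simp add: of_nat_diff)
  qed
  show "Hoeffding_ineq M ?I on_ind (\<lambda>_. 0) (\<lambda>_. 1)"
  proof -
    have "indep_interval_bounded_random_variables M ?I on_ind (\<lambda>_. 0) (\<lambda>_. 1)"
      by unfold_locales (use ind in \<open>auto simp: on_ind_def\<close>)
    then show ?thesis by (simp add: Hoeffding_ineq_def)
  qed
  show "(\<Sum>j\<in>?I. expectation (on_ind j)) = (1 - p k) * (real b - real a)" by (rule mu)
  show "(\<Sum>j\<in>?I. ((\<lambda>_. 1::real) j - (\<lambda>_. 0) j)\<^sup>2) = real b - real a"
    using card ab by (simp add: of_nat_diff)
qed

lemma on_count_lower_tail:
  assumes k: "k \<in> {1..l}" and ab: "a < b" and e: "\<epsilon> \<ge> 0"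
  shows "prob {\<omega>\<in>space M. real (on_count (Z \<omega>) k a b) \<le> (1 - p k) * (real b - real a) - \<epsilon>}
           \<le> exp (-2 * \<epsilon>\<^sup>2 / (real b - real a))"
proof -
  interpret H: Hoeffding_ineq M "(\<lambda>u. (u, k)) ` {a<..b}" on_ind "\<lambda>_. 0" "\<lambda>_. 1" "\<Sum>j\<in>(\<lambda>u. (u, k)) ` {a<..b}. expectation (on_ind j)"
    by (rule on_count_Hoeffding(1)[OF k ab]) (rule reflexive)
  show ?thesis
    using H.Hoeffding_ineq_le[OF e] ab unfolding on_count_Hoeffding(2,3)[OF k ab] on_count_as_sum by simp
qed

lemma on_count_upper_tail:
  assumes k: "k \<in> {1..l}" and ab: "a < b" and e: "\<epsilon> \<ge> 0"
  shows "prob {\<omega>\<in>space M. real (on_count (Z \<omega>) k a b) \<ge> (1 - p k) * (real b - real a) + \<epsilon>}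
           \<le> exp (-2 * \<epsilon>\<^sup>2 / (real b - real a))"
proof -
  interpret H: Hoeffding_ineq M "(\<lambda>u. (u, k)) ` {a<..b}" on_ind "\<lambda>_. 0" "\<lambda>_. 1" "\<Sum>j\<in>(\<lambda>u. (u, k)) ` {a<..b}. expectation (on_ind j)"
    by (rule on_count_Hoeffding(1)[OF k ab]) (rule reflexive)
  show ?thesis
    using H.Hoeffding_ineq_ge[OF e] ab unfolding on_count_Hoeffding(2,3)[OF k ab] on_count_as_sum by simp
qed

definition rate :: real where "rate = 1 - Max (p ` {1..l})"

lemma rate_attained: "\<exists>m\<in>{1..l}. rate = 1 - p m"
proof -
  have "finite (p ` {1..l})" "p ` {1..l} \<noteq> {}" using l1 by auto
  from Max_in[OF this] obtain m where m: "m \<in> {1..l}" "Max (p ` {1..l}) = p m"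
    by auto
  then show ?thesis by (auto simp: rate_def)
qed

lemma rate_le_link: "k \<in> {1..l} \<Longrightarrow> rate \<le> 1 - p k"
  using Max_ge[of "p ` {1..l}" "p k"] by (auto simp: rate_def)

lemma rate_pos: "0 < rate" and rate_le_one: "rate \<le> 1"
  using rate_attained p_range by auto

definition windows_good :: "'a \<Rightarrow> nat \<Rightarrow> real \<Rightarrow> bool" where
  "windows_good \<omega> t x \<longleftrightarrow> (\<forall>k\<in>{1..l}. \<forall>a b. a \<le> b \<longrightarrow> b \<le> t \<longrightarrow>
      real (on_count (Z \<omega>) k a b) \<ge> (1 - p k) * (real b - real a) - x)"

lemma windows_good_pred [measurable]: "Measurable.pred M (\<lambda>\<omega>. windows_good \<omega> t x)"
  unfolding windows_good_def by measurable

lemma finished_if_good: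
  assumes "windows_good \<omega> t x" "x \<ge> 0" "rate * real t - real l * (x + 1) \<ge> real n"
  shows "rank (Z \<omega>) n t (Suc l) = n"
proof (rule finished_if_windows_good[OF rate_le_one assms(2) _ assms(3)])
  show "\<forall>k\<in>{1..l}. \<forall>a b. a \<le> b \<longrightarrow> b \<le> t \<longrightarrow> rate * (real b - real a) - x \<le> real (on_count (Z \<omega>) k a b)"
  proof (intro ballI allI impI)
    fix k a b assume k: "k \<in> {1..l}" and ab: "a \<le> b" "b \<le> t"
    have "rate * (real b - real a) \<le> (1 - p k) * (real b - real a)"
      using rate_le_link[OF k] ab by (intro mult_right_mono) auto
    then show "rate * (real b - real a) - x \<le> real (on_count (Z \<omega>) k a b)"
      using assms(1) k ab unfolding windows_good_def by force
  qed
qed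

definition deficit_event :: "real \<Rightarrow> nat \<times> nat \<times> nat \<Rightarrow> 'a set" where
  "deficit_event x j = (case j of (k, a, b) \<Rightarrow>
     {\<omega>\<in>space M. a < b \<and> real (on_count (Z \<omega>) k a b) \<le> (1 - p k) * (real b - real a) - x})"

lemma deficit_event_sets: "deficit_event x j \<in> sets M"
  unfolding deficit_event_def by (cases j) (simp, measurable)

lemma prob_deficit_event:
  assumes k: "k \<in> {1..l}" and b: "b \<le> t" and x: "x \<ge> 0"
  shows "prob (deficit_event x (k, a, b)) \<le> exp (-2 * x\<^sup>2 / real t)"
proof (cases "a < b")
  case True
  have "prob (deficit_event x (k, a, b))
      = prob {\<omega>\<in>space M. real (on_count (Z \<omega>) k a b) \<le> (1 - p k) * (real b - real a) - x}"
    using True by (simp add: deficit_event_def)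
  also have "\<dots> \<le> exp (-2 * x\<^sup>2 / (real b - real a))" by (rule on_count_lower_tail[OF k True x])
  also have "\<dots> \<le> exp (-2 * x\<^sup>2 / real t)"
    using True b by (simp add: frac_le)
  finally show ?thesis .
next
  case False
  then show ?thesis by (simp add: deficit_event_def)
qed

(* Union bound over the l (t+1)^2 windows, each controlled by Hoeffding. *)
lemma prob_not_windows_good:
  assumes t: "t \<ge> 1" and x: "x \<ge> 0"
  shows "prob {\<omega>\<in>space M. \<not> windows_good \<omega> t x} \<le> real l * (real t + 1)^2 * exp (-2 * x\<^sup>2 / real t)"
proof -
  let ?S = "{1..l} \<times> {..t} \<times> {..t}"
  have sub: "{\<omega>\<in>space M. \<not> windows_good \<omega> t x} \<subseteq> (\<Union>j\<in>?S. deficit_event x j)"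
  proof
    fix \<omega> assume "\<omega> \<in> {\<omega>\<in>space M. \<not> windows_good \<omega> t x}"
    then obtain k a b where w: "\<omega> \<in> space M" "k \<in> {1..l}" "a \<le> b" "b \<le> t"
      "real (on_count (Z \<omega>) k a b) < (1 - p k) * (real b - real a) - x"
      unfolding windows_good_def by force
    have "a \<noteq> b" using w(5) x by (cases "a = b") auto
    then have "\<omega> \<in> deficit_event x (k, a, b)" using w unfolding deficit_event_def by auto
    moreover have "(k, a, b) \<in> ?S" using w by auto
    ultimately show "\<omega> \<in> (\<Union>j\<in>?S. deficit_event x j)" by blast
  qed
  have each: "prob (deficit_event x j) \<le> exp (-2 * x\<^sup>2 / real t)" if j: "j \<in> ?S" for j
  proof -
    obtain k a b where "j = (k, a, b)" "k \<in> {1..l}" "b \<le> t" using j by auto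
    then show ?thesis using prob_deficit_event[of k b t x a] x by simp
  qed
  have "prob {\<omega>\<in>space M. \<not> windows_good \<omega> t x} \<le> prob (\<Union>j\<in>?S. deficit_event x j)"
    by (rule finite_measure_mono[OF sub]) (auto intro: deficit_event_sets)
  also have "\<dots> \<le> (\<Sum>j\<in>?S. prob (deficit_event x j))"
    by (rule finite_measure_subadditive_finite) (auto intro: deficit_event_sets)
  also have "\<dots> \<le> (\<Sum>j\<in>?S. exp (-2 * x\<^sup>2 / real t))" by (rule sum_mono) (rule each)
  also have "\<dots> = real l * (real t + 1)^2 * exp (-2 * x\<^sup>2 / real t)"
    by (simp add: card_cartesian_product power2_eq_square algebra_simps)
  finally show ?thesis .
qed

abbreviation ctime :: "nat \<Rightarrow> 'a \<Rightarrow> nat" where "ctime n \<omega> \<equiv> completion_time (Z \<omega>) l n"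

lemma ctime_gt_event:
  assumes "x \<ge> 0" "rate * real t - real l * (x + 1) \<ge> real n"
  shows "{\<omega>\<in>space M. ctime n \<omega> > t} \<subseteq> {\<omega>\<in>space M. \<not> windows_good \<omega> t x}"
  using finished_if_good[OF _ assms] completion_time_le by fastforce

lemma prob_ctime_gt:
  assumes "t \<ge> 1" "x \<ge> 0" "rate * real t - real l * (x + 1) \<ge> real n"
  shows "prob {\<omega>\<in>space M. ctime n \<omega> > t} \<le> real l * (real t + 1)^2 * exp (-2 * x\<^sup>2 / real t)"
proof -
  have "prob {\<omega>\<in>space M. ctime n \<omega> > t} \<le> prob {\<omega>\<in>space M. \<not> windows_good \<omega> t x}"
    by (rule finite_measure_mono[OF ctime_gt_event[OF assms(2,3)]]) measurable
  also have "\<dots> \<le> real l * (real t + 1)^2 * exp (-2 * x\<^sup>2 / real t)" by (rule prob_not_windows_good[OF assms(1,2)])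
  finally show ?thesis .
qed

(* Lower tail of T_n: finishing before y (while the good event guarantees finishing at all)
   requires the worst link to be ON at least n times before y. *)
lemma ctime_less_event:
  fixes y :: real
  assumes "x \<ge> 0" "rate * real t - real l * (x + 1) \<ge> real n" "m \<in> {1..l}"
  shows "{\<omega>\<in>space M. real (ctime n \<omega>) < y} \<subseteq>
           {\<omega>\<in>space M. \<not> windows_good \<omega> t x} \<union> {\<omega>\<in>space M. n \<le> on_count (Z \<omega>) m 0 (nat \<lfloor>y\<rfloor>)}"
proof
  fix \<omega> assume w: "\<omega> \<in> {\<omega>\<in>space M. real (ctime n \<omega>) < y}"
  show "\<omega> \<in> {\<omega>\<in>space M. \<not> windows_good \<omega> t x} \<union> {\<omega>\<in>space M. n \<le> on_count (Z \<omega>) m 0 (nat \<lfloor>y\<rfloor>)}"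
  proof (cases "windows_good \<omega> t x")
    case True
    then have r: "rank (Z \<omega>) n t (Suc l) = n" using finished_if_good assms by blast
    from w have "(\<forall>t. rank (Z \<omega>) n t (Suc l) < n) \<or> rank (Z \<omega>) n (nat \<lfloor>y\<rfloor>) (Suc l) = n"
      using completion_time_less by blast
    then have "rank (Z \<omega>) n (nat \<lfloor>y\<rfloor>) (Suc l) = n" using r by (metis less_irrefl)
    then have "n \<le> on_count (Z \<omega>) m 0 (nat \<lfloor>y\<rfloor>)" by (rule finished_on_count[OF assms(3)])
    then show ?thesis using w by auto
  next
    case False
    then show ?thesis using w by auto
  qed
qed

lemma prob_on_count_ge:
  assumes m: "m \<in> {1..l}" "rate = 1 - p m" and s: "s \<ge> 1" and e: "real n - rate * real s \<ge> 0"
  shows "prob {\<omega>\<in>space M. n \<le> on_count (Z \<omega>) m 0 s} \<le> exp (-2 * (real n - rate * real s)\<^sup>2 / real s)"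
proof -
  have "{\<omega>\<in>space M. n \<le> on_count (Z \<omega>) m 0 s} =
        {\<omega>\<in>space M. real (on_count (Z \<omega>) m 0 s) \<ge> (1 - p m) * (real s - real 0) + (real n - rate * real s)}"
    using m by auto
  also have "prob \<dots> \<le> exp (-2 * (real n - rate * real s)\<^sup>2 / (real s - real 0))"
    by (rule on_count_upper_tail[OF m(1) _ e]) (use s in auto)
  finally show ?thesis by simp
qed

(* Far tail of T_n: for t beyond 2n/A and 4l/A, choose x = A t / (2l) - 1 in prob_ctime_gt. *)
lemma prob_ctime_gt_far:
  assumes t4: "4 * real l \<le> rate * real t" and tn: "2 * real n \<le> rate * real t"
  shows "prob {\<omega>\<in>space M. t < ctime n \<omega>}
           \<le> real l * ((real t + 1)^2 * exp (- (rate\<^sup>2 / (8 * real l ^ 2)) * real t))"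
proof -
  have rate: "0 < rate" "rate \<le> 1" and l: "1 \<le> real l" using rate_pos rate_le_one l1 by auto
  define x where "x = rate * real t / (2 * real l) - 1"
  have x_ge: "rate * real t / (4 * real l) \<le> x"
    using t4 l by (simp add: x_def field_simps)
  have "0 \<le> rate * real t / (4 * real l)" using rate by simp
  then have x0: "0 \<le> x" using x_ge by linarith
  have finish: "real n \<le> rate * real t - real l * (x + 1)"
    using tn rate l by (simp add: x_def field_simps)
  have "rate\<^sup>2 / (8 * real l ^ 2) * real t = 2 * (rate * real t / (4 * real l))\<^sup>2 / real t"
    using t4 rate l by (simp add: field_simps power2_eq_square)
  also have "\<dots> \<le> 2 * x\<^sup>2 / real t"
    using x_ge rate l by (intro divide_right_mono mult_left_mono power_mono) auto
  finally have "exp (-2 * x\<^sup>2 / real t) \<le> exp (- (rate\<^sup>2 / (8 * real l ^ 2)) * real t)" by simp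
  moreover have "1 \<le> t" using t4 rate l mult_left_le_one_le[of "real t" rate] by linarith
  ultimately show ?thesis
    using prob_ctime_gt[OF _ x0 finish] l
    by (smt (verit) mult_left_mono mult.assoc zero_le_power2)
qed

lemma ctime_geometric_tail:
  obtains T where "\<And>n t. T \<le> t \<Longrightarrow> 2 * real n / rate \<le> real t \<Longrightarrow>
    prob {\<omega>\<in>space M. t < ctime n \<omega>} \<le> real l * exp (- rate\<^sup>2 / (16 * real l ^ 2)) ^ t"
proof -
  define \<beta> where "\<beta> = rate\<^sup>2 / (8 * real l ^ 2)"
  have "0 < \<beta>" using rate_pos l1 by (simp add: \<beta>_def)
  then obtain T0 where T0: "\<And>t. T0 \<le> t \<Longrightarrow> (real t + 1)^2 * exp (- \<beta> * real t) \<le> exp (- \<beta> / 2) ^ t"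
    using poly_exp_le_geometric[of \<beta>] unfolding eventually_sequentially by auto
  show ?thesis
  proof (rule that[of "max T0 (nat \<lceil>4 * real l / rate\<rceil>)"])
    fix n t assume t: "max T0 (nat \<lceil>4 * real l / rate\<rceil>) \<le> t" and tn: "2 * real n / rate \<le> real t"
    have "4 * real l / rate \<le> real t" using t by linarith
    then have "4 * real l \<le> rate * real t" "2 * real n \<le> rate * real t"
      using tn rate_pos by (simp_all add: pos_divide_le_eq mult.commute)
    then have "prob {\<omega>\<in>space M. t < ctime n \<omega>} \<le> real l * ((real t + 1)^2 * exp (- \<beta> * real t))"
      unfolding \<beta>_def by (rule prob_ctime_gt_far)
    also have "\<dots> \<le> real l * exp (- \<beta> / 2) ^ t"
      using T0[of t] t by (intro mult_left_mono) auto
    finally show "prob {\<omega>\<in>space M. t < ctime n \<omega>} \<le> real l * exp (- rate\<^sup>2 / (16 * real l ^ 2)) ^ t"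
      by (simp add: \<beta>_def)
  qed
qed

lemma ctime_expectation_upper:
  obtains T K where "\<And>n t0 N. t0 \<le> N \<Longrightarrow> T \<le> N \<Longrightarrow> 2 * real n / rate \<le> real N \<Longrightarrow>
           integrable M (\<lambda>\<omega>. real (ctime n \<omega>)) \<and>
           expectation (\<lambda>\<omega>. real (ctime n \<omega>))
             \<le> real t0 + real N * prob {\<omega>\<in>space M. t0 < ctime n \<omega>} + K"
proof -
  obtain T where tail_bound: "\<And>n t. T \<le> t \<Longrightarrow> 2 * real n / rate \<le> real t \<Longrightarrow>
      prob {\<omega>\<in>space M. t < ctime n \<omega>} \<le> real l * exp (- rate\<^sup>2 / (16 * real l ^ 2)) ^ t"
    by (rule ctime_geometric_tail) (rule that)
  define q where "q = exp (- rate\<^sup>2 / (16 * real l ^ 2))"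
  note T = tail_bound[folded q_def]
  have q: "0 \<le> q" "q < 1" using rate_pos l1 by (auto simp: q_def)
  have g: "summable (\<lambda>t. real l * q ^ t)" using q by (intro summable_mult summable_geometric) auto
  show ?thesis
  proof (rule that[of T "\<Sum>t. real l * q ^ t"])
    fix n t0 N assume "t0 \<le> N" "T \<le> N" "2 * real n / rate \<le> real N"
    then have tail: "\<And>t. N \<le> t \<Longrightarrow> prob {\<omega>\<in>space M. t < ctime n \<omega>} \<le> real l * q ^ t"
      by (intro T) auto
    show "integrable M (\<lambda>\<omega>. real (ctime n \<omega>)) \<and>
        expectation (\<lambda>\<omega>. real (ctime n \<omega>))
          \<le> real t0 + real N * prob {\<omega>\<in>space M. t0 < ctime n \<omega>} + (\<Sum>t. real l * q ^ t)"
      using expectation_nat_le_tail[OF ctime_meas \<open>t0 \<le> N\<close> g _ tail] q by auto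
  qed
qed

lemma integrable_ctime: "integrable M (\<lambda>\<omega>. real (ctime n \<omega>))"
proof -
  obtain T K where T: "\<And>n t0 N. t0 \<le> N \<Longrightarrow> T \<le> N \<Longrightarrow> 2 * real n / rate \<le> real N \<Longrightarrow>
      integrable M (\<lambda>\<omega>. real (ctime n \<omega>)) \<and>
      expectation (\<lambda>\<omega>. real (ctime n \<omega>)) \<le> real t0 + real N * prob {\<omega>\<in>space M. t0 < ctime n \<omega>} + K"
    by (rule ctime_expectation_upper) (rule that)
  define N where "N = max T (nat \<lceil>2 * real n / rate\<rceil>)"
  have "2 * real n / rate \<le> real N" unfolding N_def by linarith
  then show ?thesis using T[of N N n] by (simp add: N_def)
qed

end

(* The deviation scale is
   dev n = w_n = n^(1/2+delta) / (4A); the window for T_n is [y_lo n, t_hi n], and x_hi n is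
   the slack used in the good event at time t_hi n. *)
locale line_network_concentration = line_network +
  fixes \<delta> :: real
  assumes \<delta>_pos: "0 < \<delta>" and \<delta>_less: "\<delta> < 1/2"
begin

definition dev :: "nat \<Rightarrow> real" where
  "dev n = real n powr (1/2 + \<delta>) / (4 * rate)"

definition t_hi :: "nat \<Rightarrow> nat" where
  "t_hi n = nat \<lceil>real n / rate + dev n\<rceil>"

definition y_lo :: "nat \<Rightarrow> real" where
  "y_lo n = real n / rate - dev n"

definition x_hi :: "nat \<Rightarrow> real" where
  "x_hi n = real n powr (1/2 + \<delta>) / (8 * real l)"

lemma dev_nonneg: "0 \<le> dev n"
  using rate_pos by (simp add: dev_def)

lemma dev_le: "dev n \<le> real n / (4 * rate)"
proof (cases "n = 0")
  case False
  then have "real n powr (1/2 + \<delta>) \<le> real n powr 1"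
    using \<delta>_less by (intro powr_mono) auto
  then show ?thesis using rate_pos by (simp add: dev_def divide_right_mono)
qed (simp add: dev_def)

lemma dev_large: "\<forall>\<^sub>F n in sequentially. R \<le> dev n"
proof -
  have "filterlim dev at_top sequentially"
    unfolding dev_def[abs_def] using \<delta>_pos rate_pos by (intro powr_at_top_sequentially) auto
  then show ?thesis by (simp add: filterlim_at_top)
qed

lemma t_hi_bounds:
  "real n / rate + dev n \<le> real (t_hi n)" "real (t_hi n) \<le> real n / rate + dev n + 1"
proof -
  have "0 \<le> real n / rate + dev n" using dev_nonneg[of n] rate_pos by simp
  then have "real (t_hi n) = real_of_int \<lceil>real n / rate + dev n\<rceil>" by (simp add: t_hi_def)
  then show "real n / rate + dev n \<le> real (t_hi n)" "real (t_hi n) \<le> real n / rate + dev n + 1"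
    by linarith+
qed

lemma n_le_scaled: "real n \<le> real n / rate"
  using rate_pos rate_le_one mult_right_le_one_le[of "real n" rate] by (simp add: le_divide_eq)

lemma t_hi_le_double: "2 \<le> n \<Longrightarrow> real (t_hi n) \<le> 2 * real n / rate"
proof -
  assume "2 \<le> n"
  moreover note n_le_scaled[of n]
  moreover have "real n / (4 * rate) = real n / rate / 4" by simp
  ultimately show ?thesis using t_hi_bounds(2)[of n] dev_le[of n] by simp
qed

lemma powr_half_delta_sq: "(real n powr (1/2 + \<delta>))\<^sup>2 = real n * real n powr (2 * \<delta>)"
proof (cases "n = 0")
  case False
  then have "(real n powr (1/2 + \<delta>))\<^sup>2 = real n powr (1 + 2 * \<delta>)"
    by (simp add: powr_realpow[symmetric] powr_powr algebra_simps)
  then show ?thesis using False by (simp add: powr_add)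
qed simp

lemma finished_by_t_hi:
  "\<forall>\<^sub>F n in sequentially. real n \<le> rate * real (t_hi n) - real l * (x_hi n + 1)"
  using dev_large[of "2 * real l / rate"]
proof eventually_elim
  case (elim n)
  have "real n + rate * dev n \<le> rate * real (t_hi n)"
    using t_hi_bounds(1)[of n] rate_pos by (simp add: field_simps)
  moreover have "real l * (x_hi n + 1) = rate * dev n / 2 + real l"
    using rate_pos l1 by (simp add: x_hi_def dev_def field_simps)
  moreover have "2 * real l \<le> rate * dev n"
    using elim rate_pos by (simp add: field_simps)
  ultimately show ?case by linarith
qed

(* The Hoeffding exponent at t = 2n/A is a multiple of n^(2 delta). *)
lemma x_hi_exponent:
  assumes "0 < n"
  shows "2 * (x_hi n)\<^sup>2 / (2 * (real n / rate)) = rate / (64 * (real l)\<^sup>2) * real n powr (2 * \<delta>)"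
  using assms rate_pos l1 unfolding x_hi_def power_divide powr_half_delta_sq
  by (simp add: field_simps power2_eq_square)

lemma y_lo_floor:
  assumes "2 \<le> n"
  shows "1 \<le> real (nat \<lfloor>y_lo n\<rfloor>)" "real (nat \<lfloor>y_lo n\<rfloor>) \<le> y_lo n"
proof -
  have "3 / 4 * (real n / rate) \<le> y_lo n"
    using dev_le[of n] by (simp add: y_lo_def)
  moreover have "2 \<le> real n / rate" using assms n_le_scaled[of n] by simp
  ultimately have "1 \<le> \<lfloor>y_lo n\<rfloor>" by (simp add: one_le_floor)
  then show "1 \<le> real (nat \<lfloor>y_lo n\<rfloor>)" "real (nat \<lfloor>y_lo n\<rfloor>) \<le> y_lo n"
    by (simp_all add: of_int_floor_le)
qed

(* The Hoeffding exponent for a deficit of A w_n over n/A steps is a multiple of n^(2 delta). *)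
lemma dev_exponent:
  assumes "0 < n"
  shows "2 * (rate * dev n)\<^sup>2 / (real n / rate) = rate / 8 * real n powr (2 * \<delta>)"
  using assms rate_pos
  unfolding dev_def power_mult_distrib power_divide powr_half_delta_sq
  by (simp add: field_simps power2_eq_square)

lemma prob_not_windows_good_hi:
  "\<forall>\<^sub>F n in sequentially.
     prob {\<omega>\<in>space M. \<not> windows_good \<omega> (t_hi n) (x_hi n)} \<le> 1 / real n ^ 2"
proof -
  have "0 < rate / (64 * (real l)\<^sup>2)" using rate_pos l1 by simp
  from stretched_exp_small[OF this, of "2 * \<delta>" "9 * real l / rate\<^sup>2"] \<delta>_pos
  have small: "\<forall>\<^sub>F n in sequentially. 9 * real l / rate\<^sup>2 * real n ^ 2 *
      exp (- (rate / (64 * (real l)\<^sup>2)) * real n powr (2 * \<delta>)) \<le> 1 / real n ^ 2"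
    by simp
  show ?thesis using eventually_ge_at_top[of "2::nat"] small
  proof eventually_elim
    case (elim n)
    define c where "c = real n / rate"
    define e where "e = exp (- (rate / (64 * (real l)\<^sup>2)) * real n powr (2 * \<delta>))"
    have c: "2 \<le> c" using elim(1) n_le_scaled[of n] by (simp add: c_def)
    have t: "c \<le> real (t_hi n)" "real (t_hi n) \<le> 2 * c"
      using t_hi_bounds(1)[of n] dev_nonneg[of n] t_hi_le_double[OF elim(1)] by (auto simp: c_def)
    have "2 * (x_hi n)\<^sup>2 / (2 * c) \<le> 2 * (x_hi n)\<^sup>2 / real (t_hi n)"
      using t c by (intro divide_left_mono) auto
    then have "exp (-2 * (x_hi n)\<^sup>2 / real (t_hi n)) \<le> e"
      using x_hi_exponent[of n] elim(1) by (simp add: c_def e_def)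
    moreover have "(real (t_hi n) + 1)\<^sup>2 \<le> (3 * c)\<^sup>2" using t c by (intro power_mono) auto
    ultimately have "real l * (real (t_hi n) + 1)\<^sup>2 * exp (-2 * (x_hi n)\<^sup>2 / real (t_hi n))
        \<le> real l * (3 * c)\<^sup>2 * e"
      by (intro mult_mono mult_left_mono) auto
    also have "\<dots> = 9 * real l / rate\<^sup>2 * real n ^ 2 * e"
      by (simp add: c_def field_simps power2_eq_square)
    also have "\<dots> \<le> 1 / real n ^ 2" using elim(2) by (simp add: e_def)
    finally show ?case
      using prob_not_windows_good[of "t_hi n" "x_hi n"] t c by (simp add: x_hi_def)
  qed
qed

lemma prob_ctime_gt_hi:
  "\<forall>\<^sub>F n in sequentially. prob {\<omega>\<in>space M. t_hi n < ctime n \<omega>} \<le> 1 / real n ^ 2"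
  using finished_by_t_hi prob_not_windows_good_hi
proof eventually_elim
  case (elim n)
  have "prob {\<omega>\<in>space M. t_hi n < ctime n \<omega>}
        \<le> prob {\<omega>\<in>space M. \<not> windows_good \<omega> (t_hi n) (x_hi n)}"
    using elim(1) by (intro finite_measure_mono ctime_gt_event) (auto simp: x_hi_def)
  then show ?case using elim(2) by linarith
qed

(* The worst link is ON n times before y_lo n with probability at most 1/n^2 eventually;
   here the deficit n - A y_lo n = n^(1/2+delta) / 4 is used. *)
lemma prob_worst_link_busy:
  assumes m: "m \<in> {1..l}" "rate = 1 - p m"
  shows "\<forall>\<^sub>F n in sequentially.
           prob {\<omega>\<in>space M. n \<le> on_count (Z \<omega>) m 0 (nat \<lfloor>y_lo n\<rfloor>)} \<le> 1 / real n ^ 2"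
proof -
  have "0 < rate / 8" using rate_pos by simp
  from stretched_exp_small[OF this, of "2 * \<delta>" 1] \<delta>_pos
  have small: "\<forall>\<^sub>F n in sequentially.
      1 * real n ^ 2 * exp (- (rate / 8) * real n powr (2 * \<delta>)) \<le> 1 / real n ^ 2"
    by simp
  show ?thesis using eventually_ge_at_top[of "2::nat"] small
  proof eventually_elim
    case (elim n)
    define c where "c = real n / rate"
    define s where "s = nat \<lfloor>y_lo n\<rfloor>"
    have y: "y_lo n \<le> c" using dev_nonneg[of n] by (simp add: y_lo_def c_def)
    have s: "1 \<le> real s" "real s \<le> y_lo n" using y_lo_floor[OF elim(1)] by (simp_all add: s_def)
    have gap: "rate * dev n \<le> real n - rate * real s"
    proof -
      have "rate * real s \<le> rate * y_lo n" using s(2) rate_pos by (intro mult_left_mono) auto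
      also have "\<dots> = real n - rate * dev n" using rate_pos by (simp add: y_lo_def field_simps)
      finally show ?thesis by linarith
    qed
    have "2 * (rate * dev n)\<^sup>2 / c \<le> 2 * (real n - rate * real s)\<^sup>2 / real s"
      using gap s y dev_nonneg[of n] rate_pos
      by (intro frac_le mult_left_mono power_mono) auto
    moreover have "2 * (rate * dev n)\<^sup>2 / c = rate / 8 * real n powr (2 * \<delta>)"
      using dev_exponent elim(1) by (simp add: c_def)
    ultimately have "exp (-2 * (real n - rate * real s)\<^sup>2 / real s) \<le> exp (- (rate / 8) * real n powr (2 * \<delta>))"
      by simp
    also have "\<dots> \<le> 1 * real n ^ 2 * exp (- (rate / 8) * real n powr (2 * \<delta>))"
      using elim(1) by (simp add: one_le_power)
    also have "\<dots> \<le> 1 / real n ^ 2" using elim(2) .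
    finally have tail: "exp (-2 * (real n - rate * real s)\<^sup>2 / real s) \<le> 1 / real n ^ 2" .
    have "0 \<le> rate * dev n" using dev_nonneg[of n] rate_pos by simp
    then have "prob {\<omega>\<in>space M. n \<le> on_count (Z \<omega>) m 0 s} \<le> exp (-2 * (real n - rate * real s)\<^sup>2 / real s)"
      using gap s(1) by (intro prob_on_count_ge[OF m]) auto
    then show ?case using tail by (simp add: s_def)
  qed
qed

lemma prob_ctime_lt_lo:
  "\<forall>\<^sub>F n in sequentially. prob {\<omega>\<in>space M. real (ctime n \<omega>) < y_lo n} \<le> 2 / real n ^ 2"
proof -
  obtain m where m: "m \<in> {1..l}" "rate = 1 - p m" using rate_attained by blast
  show ?thesis
    using finished_by_t_hi prob_not_windows_good_hi prob_worst_link_busy[OF m]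
  proof eventually_elim
    case (elim n)
    have "prob {\<omega>\<in>space M. real (ctime n \<omega>) < y_lo n}
        \<le> prob ({\<omega>\<in>space M. \<not> windows_good \<omega> (t_hi n) (x_hi n)} \<union>
                {\<omega>\<in>space M. n \<le> on_count (Z \<omega>) m 0 (nat \<lfloor>y_lo n\<rfloor>)})"
      using elim(1) by (intro finite_measure_mono ctime_less_event m) (auto simp: x_hi_def)
    also have "\<dots> \<le> prob {\<omega>\<in>space M. \<not> windows_good \<omega> (t_hi n) (x_hi n)} +
                    prob {\<omega>\<in>space M. n \<le> on_count (Z \<omega>) m 0 (nat \<lfloor>y_lo n\<rfloor>)}"
      by (rule measure_Un_le) measurable
    finally show ?case using elim(2,3) by simp
  qed
qed

(* E T_n <= n/A + 3 w_n eventually: the tail above t_hi n contributes at most 1 + K. *)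
lemma expectation_ctime_upper:
  "\<forall>\<^sub>F n in sequentially. expectation (\<lambda>\<omega>. real (ctime n \<omega>)) \<le> real n / rate + 3 * dev n"
proof -
  obtain T K where T: "\<And>n t0 N. t0 \<le> N \<Longrightarrow> T \<le> N \<Longrightarrow> 2 * real n / rate \<le> real N \<Longrightarrow>
      integrable M (\<lambda>\<omega>. real (ctime n \<omega>)) \<and>
      expectation (\<lambda>\<omega>. real (ctime n \<omega>)) \<le> real t0 + real N * prob {\<omega>\<in>space M. t0 < ctime n \<omega>} + K"
    by (rule ctime_expectation_upper) (rule that)
  show ?thesis
    using eventually_ge_at_top[of "2::nat"] eventually_real_ge[of "real T"] eventually_real_ge[of "3 / rate"]
      dev_large[of "1 + K / 2"] prob_ctime_gt_hi
  proof eventually_elim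
    case (elim n)
    define c where "c = real n / rate"
    define N where "N = max T (nat \<lceil>2 * c\<rceil>)"
    have c: "2 \<le> c" "real n \<le> c" using elim(1) n_le_scaled[of n] by (auto simp: c_def)
    have N: "2 * c \<le> real N" "real N \<le> 3 * c"
      using c elim(2) unfolding N_def by (auto simp: of_nat_max) linarith+
    have "real (t_hi n) \<le> real N" using t_hi_le_double[OF elim(1)] N(1) by (simp add: c_def)
    then have E: "expectation (\<lambda>\<omega>. real (ctime n \<omega>))
        \<le> real (t_hi n) + real N * prob {\<omega>\<in>space M. t_hi n < ctime n \<omega>} + K"
      using T[of "t_hi n" N n] N(1) by (simp add: c_def N_def)
    have "real N * prob {\<omega>\<in>space M. t_hi n < ctime n \<omega>} \<le> 3 * c * (1 / real n ^ 2)"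
      using N(2) elim(5) c by (intro mult_mono) auto
    also have "\<dots> = 3 / (rate * real n)"
      using elim(1) rate_pos by (simp add: c_def field_simps power2_eq_square)
    also have "\<dots> \<le> 1"
      using elim(3) rate_pos by (simp add: field_simps)
    finally show ?case using E t_hi_bounds(2)[of n] elim(4) by linarith
  qed
qed

(* E T_n >= n/A - 2 w_n eventually, by the Markov-type lower bound at y_lo n. *)
lemma expectation_ctime_lower:
  "\<forall>\<^sub>F n in sequentially. y_lo n - dev n \<le> expectation (\<lambda>\<omega>. real (ctime n \<omega>))"
  using eventually_ge_at_top[of "2::nat"] eventually_real_ge[of "2 / rate"] dev_large[of 1]
    prob_ctime_lt_lo
proof eventually_elim
  case (elim n)
  define c where "c = real n / rate"
  have y: "0 \<le> y_lo n" "y_lo n \<le> c"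
    using dev_le[of n] dev_nonneg[of n] rate_pos by (auto simp: y_lo_def c_def)
  have "y_lo n * prob {\<omega>\<in>space M. real (ctime n \<omega>) < y_lo n} \<le> c * (2 / real n ^ 2)"
    using y elim(4) by (intro mult_mono) auto
  also have "\<dots> = 2 / (rate * real n)"
    using elim(1) rate_pos by (simp add: c_def field_simps power2_eq_square)
  also have "\<dots> \<le> 1"
    using elim(2) rate_pos by (simp add: field_simps)
  finally have "y_lo n - 1 \<le> y_lo n * (1 - prob {\<omega>\<in>space M. real (ctime n \<omega>) < y_lo n})"
    by (simp add: algebra_simps)
  also have "\<dots> \<le> expectation (\<lambda>\<omega>. real (ctime n \<omega>))"
    using y by (intro expectation_ge_markov integrable_ctime) auto
  finally show ?case using elim(3) by linarith
qed

(* Concentration: a deviation beyond 4 w_n = n^(1/2+delta)/A forces T_n out of the window. *)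
theorem ctime_concentration:
  "\<forall>\<^sub>F n in sequentially.
     prob {\<omega>\<in>space M. \<bar>real (ctime n \<omega>) - expectation (\<lambda>\<omega>'. real (ctime n \<omega>'))\<bar>
             > real n powr (1/2 + \<delta>) / rate} \<le> 2 * rate / real n"
  using eventually_real_ge[of "3 / (2 * rate)"] eventually_ge_at_top[of "1::nat"] dev_large[of 1]
    prob_ctime_gt_hi prob_ctime_lt_lo expectation_ctime_upper expectation_ctime_lower
proof eventually_elim
  case (elim n)
  define E where "E = expectation (\<lambda>\<omega>'. real (ctime n \<omega>'))"
  have threshold: "real n powr (1/2 + \<delta>) / rate = 4 * dev n"
    using rate_pos by (simp add: dev_def)
  have "{\<omega>\<in>space M. \<bar>real (ctime n \<omega>) - E\<bar> > 4 * dev n}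
      \<subseteq> {\<omega>\<in>space M. real (ctime n \<omega>) < y_lo n} \<union> {\<omega>\<in>space M. t_hi n < ctime n \<omega>}"
    using elim(3,6,7) t_hi_bounds(2)[of n] unfolding E_def y_lo_def
    by (auto simp: abs_if not_less)
  then have "prob {\<omega>\<in>space M. \<bar>real (ctime n \<omega>) - E\<bar> > 4 * dev n}
      \<le> prob ({\<omega>\<in>space M. real (ctime n \<omega>) < y_lo n} \<union> {\<omega>\<in>space M. t_hi n < ctime n \<omega>})"
    by (intro finite_measure_mono) measurable
  also have "\<dots> \<le> prob {\<omega>\<in>space M. real (ctime n \<omega>) < y_lo n} + prob {\<omega>\<in>space M. t_hi n < ctime n \<omega>}"
    by (rule measure_Un_le) measurable
  also have "\<dots> \<le> 3 / real n ^ 2" using elim(4,5) by simp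
  also have "\<dots> \<le> 2 * rate / real n"
    using elim(1,2) rate_pos by (simp add: field_simps power2_eq_square)
  finally show ?case unfolding threshold E_def .
qed

end

(* Theorem 3: the bound 2A/n plus a nonnegative term. *)
theorem theorem3:
  fixes M :: "'a measure" and z :: "nat \<Rightarrow> nat \<Rightarrow> 'a \<Rightarrow> bool"
    and l :: nat and p :: "nat \<Rightarrow> real" and \<delta> :: real
  assumes "prob_space M"
    and "l \<ge> 1"
    and p_range: "\<forall>i\<in>{1..l}. 0 \<le> p i \<and> p i < 1"
    and z_meas: "\<forall>t i. z t i \<in> measurable M (count_space UNIV)"
    and z_indep: "prob_space.indep_vars M (\<lambda>_. count_space UNIV) (\<lambda>(t, i). z t i)
                    {(t, i). 1 \<le> t \<and> 1 \<le> i \<and> i \<le> l}"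
    and z_distr: "\<forall>t i. 1 \<le> t \<longrightarrow> 1 \<le> i \<longrightarrow> i \<le> l \<longrightarrow>
                    measure M {\<omega> \<in> space M. z t i \<omega>} = 1 - p i"
    and unique_worst: "\<exists>m\<in>{1..l}. \<forall>i\<in>{1..l}. i \<noteq> m \<longrightarrow> p i < p m"
    and "0 < \<delta>" and "\<delta> < 1/2"
  defines "A \<equiv> 1 - Max (p ` {1..l})"
  shows "\<forall>\<^sub>F n in sequentially.
     measure M {\<omega> \<in> space M.
        \<bar>real (completion_time (\<lambda>t i. z t i \<omega>) l n)
          - (\<integral>\<omega>'. real (completion_time (\<lambda>t i. z t i \<omega>') l n) \<partial>M)\<bar>
        > real n powr (1/2 + \<delta>) / A}
     \<le> 2 * A / real n + 2 * A * real n powr (2 * \<delta>) / (real n ^ 2 - real n powr (1 + 2 * \<delta>))"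
proof -
  interpret line_network M z l p
    by (rule line_network.intro[OF assms(1)], rule line_network_axioms.intro) (fact assms)+
  interpret line_network_concentration M z l p \<delta>
    by unfold_locales (fact assms)+
  have rate: "rate = A" by (simp add: rate_def A_def)
  have "\<forall>\<^sub>F n in sequentially.
      0 \<le> 2 * A * real n powr (2 * \<delta>) / (real n ^ 2 - real n powr (1 + 2 * \<delta>))"
  proof (rule eventually_sequentiallyI[of 1])
    fix n :: nat assume "1 \<le> n"
    then have "real n powr (1 + 2 * \<delta>) \<le> real n powr 2"
      using \<open>\<delta> < 1/2\<close> by (intro powr_mono) auto
    then show "0 \<le> 2 * A * real n powr (2 * \<delta>) / (real n ^ 2 - real n powr (1 + 2 * \<delta>))"
      using rate_pos rate by (intro divide_nonneg_nonneg) auto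
  qed
  with ctime_concentration show ?thesis
    unfolding rate by eventually_elim simp
qed

end
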